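(* Ideal semantics is not serialisable: there is no selection function $\alpha$ and termination function $\beta$ such that $\mathrm{id}(F)=\mathcal{E}^{\alpha,\beta}(F)$ for every abstract argumentation framework $F$.
   Context: An abstract argumentation framework (AF) is a pair $F=(A,R)$ with $A$ a finite subset of a fixed universal set of arguments $\mathfrak{A}$ and $R\subseteq A\times A$ ($a\to b$ means $(a,b)\in R$). For $S\subseteq A$: $S^+=\{a\mid \exists b\in S: b\to a\}$, $S^-=\{a\mid\exists b\in S: a\to b\}$; for sets $S,S'$, $S\to S'$ means $S^+\cap S'\neq\emptyset$. $S$ is admissible if it is conflict-free and every attacker of an element of $S$ is attacked by some element of $S$. A preferred extension is an inclusion-maximal admissible set. The ideal extension is the inclusion-maximal admissible set $E$ with $E\subseteq E'$ for every preferred extension $E'$; $\mathrm{id}(F)$ is the set of ideal extensions of $F$. An initial set is a non-empty admissible set with no non-empty admissible proper subset; $\mathrm{IS}(F)$ is the set of initial sets. An initial set $S$ is unattacked if $S^-=\emptyset$; unchallenged if $S^-\neq\emptyset$ and no $S'\in\mathrm{IS}(F)$ has $S'\to S$; challenged if some $S'\in\mathrm{IS}(F)$ has $S'\to S$. Write $\mathrm{IS}^{u}(F),\mathrm{IS}^{uc}(F),\mathrm{IS}^{c}(F)$ for these sets. The reduct is $F^S=(A',R\cap(A'\times A'))$ with $A'=A\setminus(S\cup S^+)$. A selection function $\alpha$ maps any three sets $X,Y,Z$ of sets of arguments to a subset of $X\cup Y\cup Z$; a termination function $\beta$ maps pairs $(F,S)$ to $\{0,1\}$. Transitions: $(F,S)\to(F^{S'},S\cup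 S')$ whenever $S'\in\alpha(\mathrm{IS}^u(F),\mathrm{IS}^{uc}(F),\mathrm{IS}^c(F))$. $(F,S)\leadsto^{\alpha,\beta}(F',S')$ means $(F',S')$ is reachable from $(F,S)$ in finitely many (possibly zero) transitions and $\beta(F',S')=1$. $\mathcal{E}^{\alpha,\beta}(F)$ is the set of all $S$ with $(F,\emptyset)\leadsto^{\alpha,\beta}(F',S)$ for some $F'$. A semantics $\sigma$ is serialisable if there exist $\alpha,\beta$ with $\sigma(F)=\mathcal{E}^{\alpha,\beta}(F)$ for all AFs $F$. *)

theory Defs
  imports Main
begin

type_synonym 'a AF = "'a set \<times> ('a \<times> 'a) set"

definition is_AF :: "'a AF \<Rightarrow> bool" where
  "is_AF F \<longleftrightarrow> finite (fst F) \<and> snd F \<subseteq> fst F \<times> fst F"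

definition splus :: "'a AF \<Rightarrow> 'a set \<Rightarrow> 'a set" where
  "splus F S = {a. \<exists>b\<in>S. (b, a) \<in> snd F}"

definition sminus :: "'a AF \<Rightarrow> 'a set \<Rightarrow> 'a set" where
  "sminus F S = {a. \<exists>b\<in>S. (a, b) \<in> snd F}"

definition set_attacks :: "'a AF \<Rightarrow> 'a set \<Rightarrow> 'a set \<Rightarrow> bool" where
  "set_attacks F S S' \<longleftrightarrow> splus F S \<inter> S' \<noteq> {}"

definition conflict_free :: "'a AF \<Rightarrow> 'a set \<Rightarrow> bool" where
  "conflict_free F S \<longleftrightarrow> (\<forall>a\<in>S. \<forall>b\<in>S. (a, b) \<notin> snd F)"

definition admissible :: "'a AF \<Rightarrow> 'a set \<Rightarrow> bool" where
  "admissible F S \<longleftrightarrow> S \<subseteq> fst F \<and> conflict_free F S \<and>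
     (\<forall>a\<in>S. \<forall>b. (b, a) \<in> snd F \<longrightarrow> (\<exists>c\<in>S. (c, b) \<in> snd F))"

definition preferred :: "'a AF \<Rightarrow> 'a set \<Rightarrow> bool" where
  "preferred F S \<longleftrightarrow> admissible F S \<and> (\<forall>T. admissible F T \<and> S \<subseteq> T \<longrightarrow> T = S)"

definition ideal_candidate :: "'a AF \<Rightarrow> 'a set \<Rightarrow> bool" where
  "ideal_candidate F S \<longleftrightarrow> admissible F S \<and> (\<forall>P. preferred F P \<longrightarrow> S \<subseteq> P)"

definition ideal_ext :: "'a AF \<Rightarrow> 'a set set" where
  "ideal_ext F = {E. ideal_candidate F E \<and> (\<forall>T. ideal_candidate F T \<and> E \<subseteq> T \<longrightarrow> T = E)}"

definition initial :: "'a AF \<Rightarrow> 'a set \<Rightarrow> bool" where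
  "initial F S \<longleftrightarrow> S \<noteq> {} \<and> admissible F S \<and>
     (\<forall>T. T \<subset> S \<and> T \<noteq> {} \<longrightarrow> \<not> admissible F T)"

definition IS :: "'a AF \<Rightarrow> 'a set set" where
  "IS F = {S. initial F S}"

definition IS_u :: "'a AF \<Rightarrow> 'a set set" where
  "IS_u F = {S \<in> IS F. sminus F S = {}}"

definition IS_uc :: "'a AF \<Rightarrow> 'a set set" where
  "IS_uc F = {S \<in> IS F. sminus F S \<noteq> {} \<and> \<not> (\<exists>S'\<in>IS F. set_attacks F S' S)}"

definition IS_c :: "'a AF \<Rightarrow> 'a set set" where
  "IS_c F = {S \<in> IS F. \<exists>S'\<in>IS F. set_attacks F S' S}"

definition reduct :: "'a AF \<Rightarrow> 'a set \<Rightarrow> 'a AF" where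
  "reduct F S = (let A' = fst F - (S \<union> splus F S) in (A', snd F \<inter> (A' \<times> A')))"

definition selection_fun :: "('a set set \<Rightarrow> 'a set set \<Rightarrow> 'a set set \<Rightarrow> 'a set set) \<Rightarrow> bool" where
  "selection_fun \<alpha> \<longleftrightarrow> (\<forall>X Y Z. \<alpha> X Y Z \<subseteq> X \<union> Y \<union> Z)"

text \<open>Termination functions map pairs (F, S) to {0,1}; rendered as bool (True = 1).\<close>
definition trans_step ::
  "('a set set \<Rightarrow> 'a set set \<Rightarrow> 'a set set \<Rightarrow> 'a set set) \<Rightarrow> ('a AF \<times> 'a set) \<Rightarrow> ('a AF \<times> 'a set) \<Rightarrow> bool" where
  "trans_step \<alpha> c c' \<longleftrightarrow> (\<exists>S'. S' \<in> \<alpha> (IS_u (fst c)) (IS_uc (fst c)) (IS_c (fst c)) \<and>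
      c' = (reduct (fst c) S', snd c \<union> S'))"

definition serial_ext ::
  "('a set set \<Rightarrow> 'a set set \<Rightarrow> 'a set set \<Rightarrow> 'a set set) \<Rightarrow> ('a AF \<Rightarrow> 'a set \<Rightarrow> bool) \<Rightarrow> 'a AF \<Rightarrow> 'a set set" where
  "serial_ext \<alpha> \<beta> F = {S. \<exists>F'. (trans_step \<alpha>)\<^sup>*\<^sup>* (F, {}) (F', S) \<and> \<beta> F' S}"

definition serialisable :: "('a AF \<Rightarrow> 'a set set) \<Rightarrow> bool" where
  "serialisable \<sigma> \<longleftrightarrow> (\<exists>\<alpha> \<beta>. selection_fun \<alpha> \<and> (\<forall>F. is_AF F \<longrightarrow> \<sigma> F = serial_ext \<alpha> \<beta> F))"

end

theory Submission
  imports Defs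
begin

text \<open>Consider the frameworks with attacks \<open>a \<leftrightarrow> b\<close>, \<open>c \<leftrightarrow> d\<close>, and additionally either
  \<open>c \<rightarrow> b\<close> or \<open>b \<rightarrow> b\<close>. In both, the initial sets are \<open>{a}\<close>, \<open>{c}\<close>, \<open>{d}\<close> with the same
  classification (\<open>{a}\<close> unchallenged, \<open>{c}\<close> and \<open>{d}\<close> challenging each other), and
  removing \<open>{a}\<close> leaves the same framework. A serialisation can only derive \<open>{a}\<close> by first
  selecting \<open>{a}\<close>, so it derives \<open>{a}\<close> in both frameworks or in neither. But \<open>{a}\<close> is the
  ideal extension of the second framework, while in the first one \<open>{b, d}\<close> is preferred, so
  \<open>{a}\<close> is not even an ideal candidate.\<close>

lemma IS_u_Un_IS_uc_Un_IS_c: "IS_u F \<union> IS_uc F \<union> IS_c F = IS F"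
  unfolding IS_u_def IS_uc_def IS_c_def by blast

lemma initial_classes_cong:
  assumes "IS F = IS G"
    and "\<And>S. S \<in> IS F \<Longrightarrow> sminus F S = {} \<longleftrightarrow> sminus G S = {}"
    and "\<And>S S'. S \<in> IS F \<Longrightarrow> S' \<in> IS F \<Longrightarrow> set_attacks F S' S \<longleftrightarrow> set_attacks G S' S"
  shows "IS_u F = IS_u G" "IS_uc F = IS_uc G" "IS_c F = IS_c G"
  using assms unfolding IS_u_def IS_uc_def IS_c_def by auto

lemma IS_eq_admissible_singletons:
  assumes "\<And>S. admissible F S \<Longrightarrow> S \<noteq> {} \<Longrightarrow> \<exists>x\<in>S. admissible F {x}"
  shows "IS F = {{x} | x. admissible F {x}}"
proof -
  have "initial F S \<longleftrightarrow> (\<exists>x. S = {x} \<and> admissible F {x})" for S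
  proof
    assume "initial F S"
    then have "admissible F S" "S \<noteq> {}" and minimal: "\<And>T. T \<subset> S \<Longrightarrow> T \<noteq> {} \<Longrightarrow> \<not> admissible F T"
      unfolding initial_def by auto
    then obtain x where "x \<in> S" "admissible F {x}" using assms by blast
    moreover from this have "S = {x}" using minimal[of "{x}"] by blast
    ultimately show "\<exists>x. S = {x} \<and> admissible F {x}" by blast
  next
    assume "\<exists>x. S = {x} \<and> admissible F {x}"
    then show "initial F S" unfolding initial_def by (auto dest: subset_singletonD)
  qed
  then show ?thesis unfolding IS_def by blast
qed

lemma set_attacks_singleton: "set_attacks F S {x} \<longleftrightarrow> x \<in> splus F S"
  unfolding set_attacks_def by auto

lemma trans_step_rtranclp_extension_mono:
  "(trans_step \<alpha>)\<^sup>*\<^sup>* c c' \<Longrightarrow> snd c \<subseteq> snd c'"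
  by (induction rule: rtranclp_induct) (auto simp: trans_step_def)

text \<open>A derivation of \<open>E\<close> starts by selecting an initial set contained in \<open>E\<close>, so only the
  reducts by those initial sets matter.\<close>

lemma serial_ext_transfer:
  assumes sel: "selection_fun \<alpha>"
    and classes: "IS_u F = IS_u G" "IS_uc F = IS_uc G" "IS_c F = IS_c G"
    and reducts: "\<And>S. S \<in> IS F \<Longrightarrow> S \<subseteq> E \<Longrightarrow> reduct F S = reduct G S"
    and "E \<noteq> {}" and "E \<in> serial_ext \<alpha> \<beta> F"
  shows "E \<in> serial_ext \<alpha> \<beta> G"
proof -
  obtain F' where derivation: "(trans_step \<alpha>)\<^sup>*\<^sup>* (F, {}) (F', E)" and "\<beta> F' E"
    using \<open>E \<in> serial_ext \<alpha> \<beta> F\<close> unfolding serial_ext_def by blast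
  then obtain c where first: "trans_step \<alpha> (F, {}) c" and rest: "(trans_step \<alpha>)\<^sup>*\<^sup>* c (F', E)"
    using \<open>E \<noteq> {}\<close> by (cases rule: converse_rtranclpE) auto
  then obtain S where S: "S \<in> \<alpha> (IS_u F) (IS_uc F) (IS_c F)" and c: "c = (reduct F S, S)"
    unfolding trans_step_def by auto
  have "S \<in> IS F"
    using S sel IS_u_Un_IS_uc_Un_IS_c unfolding selection_fun_def by blast
  moreover have "S \<subseteq> E"
    using trans_step_rtranclp_extension_mono[OF rest] c by simp
  ultimately have "trans_step \<alpha> (G, {}) c"
    using S c classes reducts unfolding trans_step_def by auto
  then have "(trans_step \<alpha>)\<^sup>*\<^sup>* (G, {}) (F', E)"
    using rest by (rule converse_rtranclp_into_rtranclp)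
  with \<open>\<beta> F' E\<close> show ?thesis unfolding serial_ext_def by blast
qed

definition af_c_attacks_b :: "'a \<Rightarrow> 'a \<Rightarrow> 'a \<Rightarrow> 'a \<Rightarrow> 'a AF" where
  "af_c_attacks_b a b c d = ({a, b, c, d}, {(a, b), (b, a), (c, b), (c, d), (d, c)})"

definition af_b_self_attacks :: "'a \<Rightarrow> 'a \<Rightarrow> 'a \<Rightarrow> 'a \<Rightarrow> 'a AF" where
  "af_b_self_attacks a b c d = ({a, b, c, d}, {(a, b), (b, a), (b, b), (c, d), (d, c)})"

lemma is_AF_examples: "is_AF (af_c_attacks_b a b c d)" "is_AF (af_b_self_attacks a b c d)"
  unfolding is_AF_def af_c_attacks_b_def af_b_self_attacks_def by auto

context
  fixes a b c d :: 'a
  assumes distinct: "distinct [a, b, c, d]"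
begin

lemma admissible_af_c_attacks_b_iff:
  "admissible (af_c_attacks_b a b c d) S \<longleftrightarrow>
     S \<subseteq> {a, b, c, d} \<and> \<not> (a \<in> S \<and> b \<in> S) \<and> \<not> (b \<in> S \<and> c \<in> S) \<and> \<not> (c \<in> S \<and> d \<in> S) \<and>
     (b \<in> S \<longrightarrow> d \<in> S)"
  using distinct unfolding admissible_def conflict_free_def af_c_attacks_b_def by auto

lemma admissible_af_b_self_attacks_iff:
  "admissible (af_b_self_attacks a b c d) S \<longleftrightarrow> S \<subseteq> {a, b, c, d} \<and> b \<notin> S \<and> \<not> (c \<in> S \<and> d \<in> S)"
  using distinct unfolding admissible_def conflict_free_def af_b_self_attacks_def by auto

lemma IS_af_c_attacks_b: "IS (af_c_attacks_b a b c d) = {{a}, {c}, {d}}"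
proof -
  have "IS (af_c_attacks_b a b c d) = {{x} | x. admissible (af_c_attacks_b a b c d) {x}}"
    by (rule IS_eq_admissible_singletons) (auto simp: admissible_af_c_attacks_b_iff)
  then show ?thesis using distinct by (auto simp: admissible_af_c_attacks_b_iff)
qed

lemma IS_af_b_self_attacks: "IS (af_b_self_attacks a b c d) = {{a}, {c}, {d}}"
proof -
  have "IS (af_b_self_attacks a b c d) = {{x} | x. admissible (af_b_self_attacks a b c d) {x}}"
    by (rule IS_eq_admissible_singletons) (auto simp: admissible_af_b_self_attacks_iff)
  then show ?thesis using distinct by (auto simp: admissible_af_b_self_attacks_iff)
qed

lemma initial_classes_examples_eq:
  "IS_u (af_b_self_attacks a b c d) = IS_u (af_c_attacks_b a b c d)"
  "IS_uc (af_b_self_attacks a b c d) = IS_uc (af_c_attacks_b a b c d)"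
  "IS_c (af_b_self_attacks a b c d) = IS_c (af_c_attacks_b a b c d)"
proof -
  have splus: "splus (af_b_self_attacks a b c d) {a} = {b}"
    "splus (af_b_self_attacks a b c d) {c} = {d}" "splus (af_b_self_attacks a b c d) {d} = {c}"
    "splus (af_c_attacks_b a b c d) {a} = {b}"
    "splus (af_c_attacks_b a b c d) {c} = {b, d}" "splus (af_c_attacks_b a b c d) {d} = {c}"
    using distinct unfolding splus_def af_b_self_attacks_def af_c_attacks_b_def by auto
  have sminus: "sminus (af_b_self_attacks a b c d) S = {} \<longleftrightarrow> sminus (af_c_attacks_b a b c d) S = {}"
    if "S \<in> {{a}, {c}, {d}}" for S
    using that unfolding sminus_def af_b_self_attacks_def af_c_attacks_b_def by auto
  have attacks: "set_attacks (af_b_self_attacks a b c d) S' S \<longleftrightarrow> set_attacks (af_c_attacks_b a b c d) S' S"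
    if "S \<in> {{a}, {c}, {d}}" "S' \<in> {{a}, {c}, {d}}" for S S'
    using that distinct by (auto simp: set_attacks_singleton splus)
  show "IS_u (af_b_self_attacks a b c d) = IS_u (af_c_attacks_b a b c d)"
    "IS_uc (af_b_self_attacks a b c d) = IS_uc (af_c_attacks_b a b c d)"
    "IS_c (af_b_self_attacks a b c d) = IS_c (af_c_attacks_b a b c d)"
    by (rule initial_classes_cong; simp add: IS_af_b_self_attacks IS_af_c_attacks_b sminus attacks)+
qed

lemma reduct_examples_eq: "reduct (af_b_self_attacks a b c d) {a} = reduct (af_c_attacks_b a b c d) {a}"
  using distinct unfolding reduct_def splus_def af_b_self_attacks_def af_c_attacks_b_def Let_def
  by auto

lemma singleton_a_not_ideal_af_c_attacks_b: "{a} \<notin> ideal_ext (af_c_attacks_b a b c d)"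
proof -
  have "preferred (af_c_attacks_b a b c d) {b, d}"
    unfolding preferred_def admissible_af_c_attacks_b_iff using distinct by auto
  then show ?thesis using distinct unfolding ideal_ext_def ideal_candidate_def by auto
qed

lemma singleton_a_ideal_af_b_self_attacks: "{a} \<in> ideal_ext (af_b_self_attacks a b c d)"
proof -
  let ?F = "af_b_self_attacks a b c d"
  have a_preferred: "a \<in> P" if "preferred ?F P" for P
  proof -
    have "admissible ?F (insert a P)"
      using that distinct unfolding preferred_def admissible_af_b_self_attacks_iff by auto
    then show ?thesis using that unfolding preferred_def by blast
  qed
  then have candidate: "ideal_candidate ?F {a}"
    unfolding ideal_candidate_def admissible_af_b_self_attacks_iff using distinct by auto
  have "preferred ?F {a, c}" "preferred ?F {a, d}"
    unfolding preferred_def admissible_af_b_self_attacks_iff using distinct by auto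
  have "T = {a}" if "ideal_candidate ?F T" "{a} \<subseteq> T" for T
  proof -
    have "T \<subseteq> {a, c} \<inter> {a, d}"
      using that(1) \<open>preferred ?F {a, c}\<close> \<open>preferred ?F {a, d}\<close>
      unfolding ideal_candidate_def by blast
    with that(2) distinct show ?thesis by auto
  qed
  with candidate show ?thesis unfolding ideal_ext_def by blast
qed

end

lemma infinite_obtain_distinct4:
  assumes "infinite (UNIV :: 'a set)"
  obtains a b c d :: 'a where "distinct [a, b, c, d]"
proof -
  obtain f :: "nat \<Rightarrow> 'a" where "inj f" using assms infinite_countable_subset by blast
  then have "distinct [f 0, f 1, f 2, f 3]" by (simp add: inj_eq)
  then show ?thesis by (rule that)
qed

theorem theorem8:
  assumes "infinite (UNIV :: 'a set)"
  shows "\<not> serialisable (ideal_ext :: 'a AF \<Rightarrow> 'a set set)"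
proof
  assume "serialisable (ideal_ext :: 'a AF \<Rightarrow> 'a set set)"
  then obtain \<alpha> \<beta> where sel: "selection_fun \<alpha>"
    and serial: "\<And>F::'a AF. is_AF F \<Longrightarrow> ideal_ext F = serial_ext \<alpha> \<beta> F"
    unfolding serialisable_def by blast
  obtain a b c d :: 'a where distinct: "distinct [a, b, c, d]"
    using infinite_obtain_distinct4[OF assms] .
  have "{a} \<in> serial_ext \<alpha> \<beta> (af_b_self_attacks a b c d)"
    using serial[OF is_AF_examples(2)] singleton_a_ideal_af_b_self_attacks[OF distinct] by simp
  then have "{a} \<in> serial_ext \<alpha> \<beta> (af_c_attacks_b a b c d)"
  proof (rule serial_ext_transfer[OF sel initial_classes_examples_eq[OF distinct], rotated 2])
    show "reduct (af_b_self_attacks a b c d) S = reduct (af_c_attacks_b a b c d) S"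
      if "S \<in> IS (af_b_self_attacks a b c d)" "S \<subseteq> {a}" for S
      using that reduct_examples_eq[OF distinct] IS_af_b_self_attacks[OF distinct] by auto
  qed simp
  then show False
    using serial[OF is_AF_examples(1)] singleton_a_not_ideal_af_c_attacks_b[OF distinct] by simp
qed

end
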